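(* Let $A\in\mathbb{R}^{r\times n}$, let $f:\mathbb{R}^r\to\mathbb{R}$ be convex, and let $\mathcal{X}\subseteq\mathbb{R}^n$ be any set such that the problem $\max\{f(Ax): x\in\mathcal{X}\}$ has a nonempty set of global optimizers. Then there exists $c\in\mathbb{R}^r$ such that the linear problem $\max_{x\in\mathcal{X}} c^\top Ax$ admits an optimal solution, and every optimal solution of this linear problem is also an optimal solution of $\max\{f(Ax): x\in\mathcal{X}\}$. *)

theory Defs
  imports "HOL-Analysis.Analysis"
begin

end

theory Submission
  imports Defs
begin

text \<open>Take a maximizer \<open>x\<^sub>0\<close> of \<open>f (A x)\<close> over \<open>X\<close> and a subgradient \<open>g\<close> of \<open>f\<close> at
  \<open>A x\<^sub>0\<close>, and let \<open>c = g\<close>. The subgradient inequality and maximality of \<open>x\<^sub>0\<close> show that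
  \<open>x\<^sub>0\<close> maximizes \<open>g \<bullet> A x\<close>; any other maximizer \<open>x\<close> of \<open>g \<bullet> A x\<close> then has
  \<open>g \<bullet> (A x - A x\<^sub>0) \<ge> 0\<close>, hence \<open>f (A x) \<ge> f (A x\<^sub>0)\<close>. The subgradient comes from a
  hyperplane separating the strict epigraph of \<open>f\<close> from \<open>(A x\<^sub>0, f (A x\<^sub>0))\<close>, which
  cannot be vertical.\<close>

lemma convex_strict_epigraph:
  assumes "convex_on S f"
  shows "convex {p. fst p \<in> S \<and> f (fst p) < snd p}"
proof -
  have "{p. fst p \<in> S \<and> f (fst p) < snd p} = epigraph S f + {0} \<times> {0<..}"
  proof (intro set_eqI iffI)
    fix p :: "'a \<times> real"
    assume "p \<in> {p. fst p \<in> S \<and> f (fst p) < snd p}"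
    then have "(fst p, f (fst p)) \<in> epigraph S f" "(0, snd p - f (fst p)) \<in> {0} \<times> {0<..}"
      by (auto simp: mem_epigraph)
    moreover have "p = (fst p, f (fst p)) + (0, snd p - f (fst p))" by simp
    ultimately show "p \<in> epigraph S f + {0} \<times> {0<..}" by (metis set_plus_intro)
  qed (auto simp: epigraph_def elim!: set_plus_elim)
  then show ?thesis
    using assms by (simp add: convex_epigraph convex_set_plus convex_Times)
qed

lemma convex_on_UNIV_has_subgradient:
  fixes f :: "'a::euclidean_space \<Rightarrow> real"
  assumes "convex_on UNIV f"
  obtains g where "\<And>z. f w + g \<bullet> (z - w) \<le> f z"
proof -
  let ?E = "{p :: 'a \<times> real. fst p \<in> UNIV \<and> f (fst p) < snd p}"
  have "convex ?E" "?E \<noteq> {}" "?E \<inter> {(w, f w)} = {}"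
    using convex_strict_epigraph[OF assms] by (auto intro!: exI[of _ w] exI[of _ "f w + 1"])
  then obtain a b where "a \<noteq> 0" and below: "\<forall>p\<in>?E. a \<bullet> p \<le> b" and "b \<le> a \<bullet> (w, f w)"
    using separating_hyperplane_sets[of ?E "{(w, f w)}"] by auto
  obtain c s where a: "a = (c, s)" by fastforce
  have sep: "c \<bullet> z + s * t \<le> c \<bullet> w + s * f w" if "f z < t" for z t
    using below \<open>b \<le> a \<bullet> (w, f w)\<close> that by (force simp: a inner_prod_def)
  have "s < 0"
  proof -
    have "s \<le> 0"
      using sep[of w "f w + 1"] by (simp add: algebra_simps)
    moreover have "s \<noteq> 0"
    proof
      assume "s = 0"
      then have "c \<bullet> c \<le> 0"
        using sep[of "w + c" "f (w + c) + 1"] by (simp add: inner_add_right)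
      with \<open>s = 0\<close> \<open>a \<noteq> 0\<close> show False by (simp add: a zero_prod_def flip: not_less)
    qed
    ultimately show ?thesis by simp
  qed
  have support: "c \<bullet> z + s * f z \<le> c \<bullet> w + s * f w" for z
  proof (rule field_le_epsilon)
    fix e :: real assume "e > 0"
    then have "c \<bullet> z + s * (f z + e / - s) \<le> c \<bullet> w + s * f w"
      using \<open>s < 0\<close> by (intro sep) (simp add: divide_pos_neg)
    then show "c \<bullet> z + s * f z \<le> c \<bullet> w + s * f w + e"
      using \<open>s < 0\<close> by (simp add: algebra_simps)
  qed
  show ?thesis
  proof
    fix z
    have "c \<bullet> (z - w) \<le> (- s) * (f z - f w)"
      using support[of z] by (simp add: inner_diff_right algebra_simps)
    then have "c \<bullet> (z - w) / (- s) \<le> f z - f w"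
      using \<open>s < 0\<close> by (subst pos_divide_le_eq) (auto simp: algebra_simps)
    then show "f w + ((1 / - s) *\<^sub>R c) \<bullet> (z - w) \<le> f z"
      by simp
  qed
qed

lemma subgradient_at_maximizer_maximizes_inner:
  fixes f :: "'a::real_inner \<Rightarrow> real"
  assumes subgradient: "\<And>z. f p + g \<bullet> (z - p) \<le> f z"
    and max: "\<forall>q\<in>S. f q \<le> f p"
  shows "\<forall>q\<in>S. g \<bullet> q \<le> g \<bullet> p"
proof
  fix q assume "q \<in> S"
  then have "f p + g \<bullet> (q - p) \<le> f p"
    using subgradient[of q] max by fastforce
  then show "g \<bullet> q \<le> g \<bullet> p"
    by (simp add: inner_diff_right)
qed

lemma inner_maximizer_maximizes_convex:
  fixes f :: "'a::real_inner \<Rightarrow> real"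
  assumes subgradient: "\<And>z. f p + g \<bullet> (z - p) \<le> f z"
    and max: "\<forall>q\<in>S. f q \<le> f p" and "p \<in> S"
    and inner_max: "\<forall>q\<in>S. g \<bullet> q \<le> g \<bullet> r"
  shows "\<forall>q\<in>S. f q \<le> f r"
proof -
  have "0 \<le> g \<bullet> (r - p)"
    using inner_max \<open>p \<in> S\<close> by (simp add: inner_diff_right)
  then have "f p \<le> f r"
    using subgradient[of r] by linarith
  then show ?thesis
    using max by force
qed

theorem proposition5:
  fixes A :: "real ^ 'n ^ 'r"
    and f :: "real ^ 'r \<Rightarrow> real"
    and X :: "(real ^ 'n) set"
  assumes "convex_on UNIV f"
    and "\<exists>x\<in>X. \<forall>y\<in>X. f (A *v y) \<le> f (A *v x)"
  shows "\<exists>c :: real ^ 'r.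
           (\<exists>x\<in>X. \<forall>y\<in>X. c \<bullet> (A *v y) \<le> c \<bullet> (A *v x)) \<and>
           (\<forall>x\<in>X. (\<forall>y\<in>X. c \<bullet> (A *v y) \<le> c \<bullet> (A *v x)) \<longrightarrow>
                    (\<forall>y\<in>X. f (A *v y) \<le> f (A *v x)))"
proof -
  let ?S = "(\<lambda>x. A *v x) ` X"
  obtain x0 where "x0 \<in> X" and max: "\<forall>y\<in>X. f (A *v y) \<le> f (A *v x0)"
    using assms(2) by blast
  obtain g where subgradient: "\<And>z. f (A *v x0) + g \<bullet> (z - A *v x0) \<le> f z"
    using convex_on_UNIV_has_subgradient[OF assms(1)] by blast
  have "\<forall>q\<in>?S. g \<bullet> q \<le> g \<bullet> (A *v x0)"
    using subgradient_at_maximizer_maximizes_inner[OF subgradient, of ?S] max by simp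
  moreover have "\<forall>q\<in>?S. f q \<le> f (A *v x)" if "\<forall>q\<in>?S. g \<bullet> q \<le> g \<bullet> (A *v x)" for x
    using inner_maximizer_maximizes_convex[OF subgradient _ _ that] max \<open>x0 \<in> X\<close> by simp
  ultimately show ?thesis
    using \<open>x0 \<in> X\<close> by (intro exI[of _ g]) auto
qed

end
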